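(* As operators on smooth functions on the total space $\mathfrak X$ (with $\Box$ acting fiberwise): (1) $(\Box+1)v_k-v_k(\Box+1)=\Box v_k-v_k\Box=\xi_k$; (2) $(\Box+1)\overline{v_l}-\overline{v_l}(\Box+1)=\Box\overline{v_l}-\overline{v_l}\Box=\bar\xi_l$; (3) $\xi_k(f)=-A_k\,\partial_z(\lambda^{-1}\partial_zf)=-A_kP(f)$. Furthermore, $(\Box+1)v_k(e_{i\bar j})=\xi_k(e_{i\bar j})+\xi_i(e_{k\bar j})+L_{v_k}B_i\cdot\overline{B_j}$.
   Context: $g\ge2$, $n=3g-3$. Over a local chart of (a manifold cover of) $\mathcal M_g$ with holomorphic coordinates $s_1,\dots,s_n$, $\partial_i=\partial/\partial s_i$, let $\pi:\mathfrak X\to$ chart be the universal family with local fiber coordinate $z$. Each fiber carries the hyperbolic metric $\frac{\sqrt{-1}}2\lambda\,dz\wedge d\bar z$ with $\partial_z\partial_{\bar z}\log\lambda=\lambda$. $a_i=-\lambda^{-1}\partial_i\partial_{\bar z}\log\lambda$, $A_i=\partial_{\bar z}a_i$, $v_i=\partial_i+a_i\partial_z$, $B_i=A_i\,\partial_z\otimes d\bar z$ (harmonic Beltrami differential). $\Box=-\lambda^{-1}\partial_z\partial_{\bar z}$. $e_{i\bar j}=\partial_i\partial_{\bar j}\log\lambda-\lambda a_i\overline{a_j}$. $P(f)=\partial_z(\lambda^{-1}\partial_zf)$; $\xi_k(f)=-\lambda^{-1}\partial_z(A_k\partial_zf)$, $\bar\xi_l(f)=-\lambda^{-1}\partial_{\bar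 z}(\overline{A_l}\partial_{\bar z}f)$. $L_{v_k}$ is the Lie derivative along $v_k$ of fiberwise tensors (using the flow of $v_k$, which maps fibers to fibers). For Beltrami differentials $\mu=\mu(z)\,\partial_z\otimes d\bar z$ and $\nu=\nu(z)\,\partial_z\otimes d\bar z$, $\mu\cdot\bar\nu$ denotes the function $\mu\overline{\nu}$. *)

theory Defs
  imports "HOL-Analysis.Analysis"
begin

text \<open>Local chart of the total space: points (s, z) with s in C^n (base coordinates)
  and z the fibre coordinate.  Functions on the chart are complex valued.\<close>

type_synonym 'n pt = "(complex ^ 'n) \<times> complex"

definition dd :: "'n::finite pt \<Rightarrow> ('n pt \<Rightarrow> complex) \<Rightarrow> 'n pt \<Rightarrow> complex" where
  "dd w F p = vector_derivative (\<lambda>t::real. F (p + t *\<^sub>R w)) (at 0)"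

fun ddl :: "'n::finite pt list \<Rightarrow> ('n pt \<Rightarrow> complex) \<Rightarrow> 'n pt \<Rightarrow> complex" where
  "ddl [] F = F"
| "ddl (w # ws) F = dd w (ddl ws F)"

definition smooth_on :: "'n::finite pt set \<Rightarrow> ('n pt \<Rightarrow> complex) \<Rightarrow> bool" where
  "smooth_on U F \<longleftrightarrow> (\<forall>ws. \<forall>p\<in>U. ddl ws F differentiable (at p))"

definition dz :: "('n::finite pt \<Rightarrow> complex) \<Rightarrow> 'n pt \<Rightarrow> complex" where
  "dz F = (\<lambda>p. (dd (0, 1) F p - \<i> * dd (0, \<i>) F p) / 2)"

definition dzb :: "('n::finite pt \<Rightarrow> complex) \<Rightarrow> 'n pt \<Rightarrow> complex" where
  "dzb F = (\<lambda>p. (dd (0, 1) F p + \<i> * dd (0, \<i>) F p) / 2)"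

definition ds :: "'n::finite \<Rightarrow> ('n pt \<Rightarrow> complex) \<Rightarrow> 'n pt \<Rightarrow> complex" where
  "ds k F = (\<lambda>p. (dd (axis k 1, 0) F p - \<i> * dd (axis k \<i>, 0) F p) / 2)"

definition dsb :: "'n::finite \<Rightarrow> ('n pt \<Rightarrow> complex) \<Rightarrow> 'n pt \<Rightarrow> complex" where
  "dsb k F = (\<lambda>p. (dd (axis k 1, 0) F p + \<i> * dd (axis k \<i>, 0) F p) / 2)"

text \<open>Data attached to the fibrewise metric (i/2) lam dz /\ dzbar.\<close>
definition lamc :: "('n::finite pt \<Rightarrow> real) \<Rightarrow> 'n pt \<Rightarrow> complex" where
  "lamc lam = (\<lambda>p. complex_of_real (lam p))"

definition loglam :: "('n::finite pt \<Rightarrow> real) \<Rightarrow> 'n pt \<Rightarrow> complex" where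
  "loglam lam = (\<lambda>p. complex_of_real (ln (lam p)))"

definition acoef :: "('n::finite pt \<Rightarrow> real) \<Rightarrow> 'n \<Rightarrow> 'n pt \<Rightarrow> complex" where
  "acoef lam i = (\<lambda>p. - ds i (dzb (loglam lam)) p / lamc lam p)"

definition Acoef :: "('n::finite pt \<Rightarrow> real) \<Rightarrow> 'n \<Rightarrow> 'n pt \<Rightarrow> complex" where
  "Acoef lam i = dzb (acoef lam i)"

definition vk :: "('n::finite pt \<Rightarrow> real) \<Rightarrow> 'n \<Rightarrow> ('n pt \<Rightarrow> complex) \<Rightarrow> 'n pt \<Rightarrow> complex" where
  "vk lam k F = (\<lambda>p. ds k F p + acoef lam k p * dz F p)"

definition vbar :: "('n::finite pt \<Rightarrow> real) \<Rightarrow> 'n \<Rightarrow> ('n pt \<Rightarrow> complex) \<Rightarrow> 'n pt \<Rightarrow> complex" where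
  "vbar lam l F = (\<lambda>p. dsb l F p + cnj (acoef lam l p) * dzb F p)"

definition box :: "('n::finite pt \<Rightarrow> real) \<Rightarrow> ('n pt \<Rightarrow> complex) \<Rightarrow> 'n pt \<Rightarrow> complex" where
  "box lam F = (\<lambda>p. - dz (dzb F) p / lamc lam p)"

definition box1 :: "('n::finite pt \<Rightarrow> real) \<Rightarrow> ('n pt \<Rightarrow> complex) \<Rightarrow> 'n pt \<Rightarrow> complex" where
  "box1 lam F = (\<lambda>p. box lam F p + F p)"

definition ecoef :: "('n::finite pt \<Rightarrow> real) \<Rightarrow> 'n \<Rightarrow> 'n \<Rightarrow> 'n pt \<Rightarrow> complex" where
  "ecoef lam i j = (\<lambda>p. ds i (dsb j (loglam lam)) p - lamc lam p * acoef lam i p * cnj (acoef lam j p))"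

definition Pop :: "('n::finite pt \<Rightarrow> real) \<Rightarrow> ('n pt \<Rightarrow> complex) \<Rightarrow> 'n pt \<Rightarrow> complex" where
  "Pop lam F = dz (\<lambda>q. dz F q / lamc lam q)"

definition xi :: "('n::finite pt \<Rightarrow> real) \<Rightarrow> 'n \<Rightarrow> ('n pt \<Rightarrow> complex) \<Rightarrow> 'n pt \<Rightarrow> complex" where
  "xi lam k F = (\<lambda>p. - dz (\<lambda>q. Acoef lam k q * dz F q) p / lamc lam p)"

definition xib :: "('n::finite pt \<Rightarrow> real) \<Rightarrow> 'n \<Rightarrow> ('n pt \<Rightarrow> complex) \<Rightarrow> 'n pt \<Rightarrow> complex" where
  "xib lam l F = (\<lambda>p. - dzb (\<lambda>q. cnj (Acoef lam l q) * dzb F q) p / lamc lam p)"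

text \<open>Lie derivative of a fibrewise Beltrami differential mu d_z (x) dzbar along a vector field
  v = d_k + c d_z (whose flow maps fibres to fibres): with v(zbar) = 0 one gets L_v dzbar = 0 and
  [v, d_z] = -(d_z c) d_z, hence L_v(mu d_z (x) dzbar) = (v(mu) - mu d_z c) d_z (x) dzbar.
  The function below is the coefficient of d_z (x) dzbar.\<close>
definition lie_beltrami :: "'n::finite \<Rightarrow> ('n pt \<Rightarrow> complex) \<Rightarrow> ('n pt \<Rightarrow> complex) \<Rightarrow> 'n pt \<Rightarrow> complex" where
  "lie_beltrami k c mu = (\<lambda>p. ds k mu p + c p * dz mu p - mu p * dz c p)"

definition LvB :: "('n::finite pt \<Rightarrow> real) \<Rightarrow> 'n \<Rightarrow> 'n \<Rightarrow> 'n pt \<Rightarrow> complex" where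
  "LvB lam k i = lie_beltrami k (acoef lam k) (Acoef lam i)"

end

theory Submission
  imports Defs
begin

(* Expanding the operators turns both sides
   into expressions in the coordinate derivatives of f, lambda and log lambda.  The Leibniz rule
   and the symmetry of mixed second derivatives (Schwarz's theorem, proved below from second
   difference quotients) bring all derivatives into a fixed order, and the curvature equation
   d_z d_zbar log lambda = lambda eliminates every mixed z/zbar derivative of log lambda.  After
   that both sides are the same rational expression in the remaining derivatives and lambda. *)

section \<open>Directional derivatives and the symmetry of second derivatives\<close>

lemma has_vector_derivative_along_line:
  assumes "(F has_derivative F') (at (q + t *\<^sub>R w))"
  shows "((\<lambda>s::real. F (q + s *\<^sub>R w)) has_vector_derivative F' w) (at t)"
proof -
  have "((\<lambda>s::real. q + s *\<^sub>R w) has_derivative (\<lambda>s. s *\<^sub>R w)) (at t)"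
    by (auto intro!: derivative_eq_intros)
  then have "((\<lambda>s::real. F (q + s *\<^sub>R w)) has_derivative (\<lambda>s. F' (s *\<^sub>R w))) (at t)"
    using has_derivative_compose[of "\<lambda>s::real. q + s *\<^sub>R w" _ t UNIV F F'] assms
    by (simp add: o_def)
  moreover have "linear F'"
    using assms has_derivative_linear by blast
  ultimately show ?thesis
    unfolding has_vector_derivative_def by (simp add: linear_scale)
qed

lemma dd_eq_derivative:
  assumes "(F has_derivative F') (at p)"
  shows "dd w F p = F' w"
  unfolding dd_def
  by (rule vector_derivative_at, rule has_vector_derivative_along_line) (use assms in simp)

lemma dd_transform_within_open:
  assumes "open U" "\<forall>q\<in>U. F q = G q" "p \<in> U"
  shows "dd w F p = dd w G p"
proof -
  have "((\<lambda>t::real. p + t *\<^sub>R w) \<longlongrightarrow> p + 0 *\<^sub>R w) (nhds 0)"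
    by (intro tendsto_intros filterlim_ident)
  then have "\<forall>\<^sub>F t in nhds (0::real). p + t *\<^sub>R w \<in> U"
    using assms by (simp add: topological_tendstoD)
  then have "\<forall>\<^sub>F t in nhds (0::real). F (p + t *\<^sub>R w) = G (p + t *\<^sub>R w)"
    by eventually_elim (use assms in auto)
  then show ?thesis
    unfolding dd_def by (intro vector_derivative_cong_eq) auto
qed

lemma second_difference_linearization:
  fixes F G' :: "'n::finite pt \<Rightarrow> complex" and p a b :: "'n pt" and h \<eta> :: real
  defines "E s t \<equiv> dd b F (p + s *\<^sub>R a + t *\<^sub>R b) - dd b F p - G' (s *\<^sub>R a + t *\<^sub>R b)"
  assumes h: "0 \<le> h"
    and in_U: "\<And>s t. s \<in> {0..h} \<Longrightarrow> t \<in> {0..h} \<Longrightarrow> p + s *\<^sub>R a + t *\<^sub>R b \<in> U"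
    and F: "\<And>q. q \<in> U \<Longrightarrow> F differentiable (at q)"
    and G': "linear G'"
    and E: "\<And>s t. s \<in> {0..h} \<Longrightarrow> t \<in> {0..h} \<Longrightarrow> norm (E s t) \<le> \<eta>"
  shows "norm (F (p + h *\<^sub>R a + h *\<^sub>R b) - F (p + h *\<^sub>R a) - F (p + h *\<^sub>R b) + F p
           - h\<^sup>2 *\<^sub>R G' a) \<le> 6 * h * \<eta>"
proof -
  \<comment> \<open>Mean value theorem for the difference along b of the slices through p and p + h a; the
    linear part of dd b F cancels in the derivative of that difference.\<close>
  define \<phi> where "\<phi> = (\<lambda>t. F (p + h *\<^sub>R a + t *\<^sub>R b) - F (p + 0 *\<^sub>R a + t *\<^sub>R b))"
  define \<phi>' where "\<phi>' = (\<lambda>t. dd b F (p + h *\<^sub>R a + t *\<^sub>R b) - dd b F (p + 0 *\<^sub>R a + t *\<^sub>R b))"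
  have line: "((\<lambda>t. F (p + s *\<^sub>R a + t *\<^sub>R b)) has_vector_derivative dd b F (p + s *\<^sub>R a + t *\<^sub>R b)) (at t)"
    if st: "s \<in> {0..h}" "t \<in> {0..h}" for s t
  proof -
    obtain F' where F': "(F has_derivative F') (at (p + s *\<^sub>R a + t *\<^sub>R b))"
      using F[OF in_U[OF st]] unfolding differentiable_def by blast
    then show ?thesis
      unfolding dd_eq_derivative[OF F'] by (rule has_vector_derivative_along_line)
  qed
  have \<phi>: "(\<phi> has_vector_derivative \<phi>' t) (at t within {0..h})" if t: "t \<in> {0..h}" for t
    unfolding \<phi>_def \<phi>'_def
    by (rule has_vector_derivative_at_within, rule has_vector_derivative_diff[OF line line])
      (use h t in auto)
  have \<phi>'_E: "\<phi>' t = G' (h *\<^sub>R a) + E h t - E 0 t" for t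
    unfolding \<phi>'_def E_def by (simp add: linear_add[OF G'])
  have "norm (\<phi>' t - \<phi>' 0) \<le> 4 * \<eta>" if t: "t \<in> {0..h}" for t
  proof -
    have "\<phi>' t - \<phi>' 0 = E h t - E 0 t - E h 0 + E 0 0"
      unfolding \<phi>'_E by simp
    moreover have "norm (E h t) \<le> \<eta>" "norm (E 0 t) \<le> \<eta>" "norm (E h 0) \<le> \<eta>" "norm (E 0 0) \<le> \<eta>"
      using E h t by auto
    ultimately show ?thesis
      using norm_triangle_ineq[of "E h t - E 0 t - E h 0" "E 0 0"]
        norm_triangle_ineq4[of "E h t - E 0 t" "E h 0"] norm_triangle_ineq4[of "E h t" "E 0 t"]
      by simp
  qed
  then have mvt: "norm (\<phi> h - \<phi> 0 - h *\<^sub>R \<phi>' 0) \<le> h * (4 * \<eta>)"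
    using vector_differentiable_bound_linearization[OF \<phi>, of 0 h 0 "4 * \<eta>"] h
    by (simp add: closed_segment_eq_real_ivl)
  have "F (p + h *\<^sub>R a + h *\<^sub>R b) - F (p + h *\<^sub>R a) - F (p + h *\<^sub>R b) + F p - h\<^sup>2 *\<^sub>R G' a
      = (\<phi> h - \<phi> 0 - h *\<^sub>R \<phi>' 0) + h *\<^sub>R (E h 0 - E 0 0)"
    unfolding \<phi>_def \<phi>'_E
    by (simp add: linear_add[OF G'] linear_scale[OF G'] algebra_simps power2_eq_square)
  also have "norm \<dots> \<le> h * (4 * \<eta>) + h * (2 * \<eta>)"
  proof (rule order_trans[OF norm_triangle_ineq add_mono[OF mvt]])
    have "norm (E h 0 - E 0 0) \<le> 2 * \<eta>"
      using E[of h 0] E[of 0 0] h norm_triangle_ineq4[of "E h 0" "E 0 0"] by auto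
    then show "norm (h *\<^sub>R (E h 0 - E 0 0)) \<le> h * (2 * \<eta>)"
      using h by (simp add: mult_left_mono)
  qed
  finally show ?thesis by (simp add: mult_ac)
qed

lemma second_difference_estimate:
  fixes F :: "'n::finite pt \<Rightarrow> complex"
  assumes U: "open U" "p \<in> U" and F: "\<And>q. q \<in> U \<Longrightarrow> F differentiable (at q)"
    and G: "dd b F differentiable (at p)" and e: "e > 0"
  shows "\<forall>\<^sub>F h in at_right 0. norm (F (p + h *\<^sub>R a + h *\<^sub>R b) - F (p + h *\<^sub>R a) - F (p + h *\<^sub>R b)
           + F p - h\<^sup>2 *\<^sub>R dd a (dd b F) p) \<le> e * h\<^sup>2"
proof -
  obtain G' where G': "(dd b F has_derivative G') (at p)"
    using G unfolding differentiable_def by blast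
  define K where "K = norm a + norm b + 1"
  have K: "K > 0"
    unfolding K_def by (simp add: add_nonneg_pos)
  have "e / (6 * K) > 0"
    using e K by simp
  then obtain d1 where d1: "d1 > 0" and
    rem: "\<And>y. norm (y - p) < d1 \<Longrightarrow>
      norm (dd b F y - dd b F p - G' (y - p)) \<le> e / (6 * K) * norm (y - p)"
    using G'[unfolded has_derivative_at_alt] by blast
  obtain d0 where d0: "d0 > 0" "ball p d0 \<subseteq> U"
    using U open_contains_ball by blast
  have "\<forall>\<^sub>F h in at_right 0. h \<in> {0<..<min d0 d1 / K}"
    using d0 d1 K by (intro eventually_at_right_real) auto
  then show ?thesis
  proof eventually_elim
    case (elim h)
    then have hK: "0 < h" "h * K < min d0 d1"
      using pos_less_divide_eq[OF K] by auto
    have small: "norm (s *\<^sub>R a + t *\<^sub>R b) < h * K" if "s \<in> {0..h}" "t \<in> {0..h}" for s t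
    proof -
      have "norm (s *\<^sub>R a + t *\<^sub>R b) \<le> s * norm a + t * norm b"
        using that norm_triangle_ineq[of "s *\<^sub>R a" "t *\<^sub>R b"] by simp
      also have "\<dots> \<le> h * norm a + h * norm b"
        using that by (intro add_mono mult_right_mono) auto
      also have "\<dots> < h * K"
        using hK unfolding K_def by (simp add: field_simps)
      finally show ?thesis .
    qed
    have "norm (F (p + h *\<^sub>R a + h *\<^sub>R b) - F (p + h *\<^sub>R a) - F (p + h *\<^sub>R b) + F p
           - h\<^sup>2 *\<^sub>R G' a) \<le> 6 * h * (e / (6 * K) * (h * K))"
    proof (rule second_difference_linearization)
      fix s t assume st: "s \<in> {0..h}" "t \<in> {0..h}"
      have "p + (s *\<^sub>R a + t *\<^sub>R b) \<in> ball p d0"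
        using small[OF st] hK dist_add_cancel[of p 0 "s *\<^sub>R a + t *\<^sub>R b"] by simp
      then show "p + s *\<^sub>R a + t *\<^sub>R b \<in> U"
        using d0 by (auto simp: add.assoc)
      have "norm (dd b F (p + (s *\<^sub>R a + t *\<^sub>R b)) - dd b F p - G' (s *\<^sub>R a + t *\<^sub>R b))
          \<le> e / (6 * K) * norm (s *\<^sub>R a + t *\<^sub>R b)"
        using rem[of "p + (s *\<^sub>R a + t *\<^sub>R b)"] small[OF st] hK by simp
      also have "\<dots> \<le> e / (6 * K) * (h * K)"
        using small[OF st] e K by (intro mult_left_mono) auto
      finally show "norm (dd b F (p + s *\<^sub>R a + t *\<^sub>R b) - dd b F p - G' (s *\<^sub>R a + t *\<^sub>R b))
          \<le> e / (6 * K) * (h * K)"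
        by (simp add: add.assoc)
    qed (use hK F G' has_derivative_linear in auto)
    moreover have "dd a (dd b F) p = G' a"
      using dd_eq_derivative[OF G'] .
    ultimately show ?case
      using K by (simp add: power2_eq_square field_simps)
  qed
qed

lemma dd_commute:
  fixes F :: "'n::finite pt \<Rightarrow> complex"
  assumes U: "open U" "p \<in> U" and F: "\<And>q. q \<in> U \<Longrightarrow> F differentiable (at q)"
    and "dd a F differentiable (at p)" "dd b F differentiable (at p)"
  shows "dd a (dd b F) p = dd b (dd a F) p"
proof -
  define \<Delta> where "\<Delta> h = F (p + h *\<^sub>R a + h *\<^sub>R b) - F (p + h *\<^sub>R a) - F (p + h *\<^sub>R b) + F p"
    for h :: real
  have \<Delta>_swap: "F (p + h *\<^sub>R b + h *\<^sub>R a) - F (p + h *\<^sub>R b) - F (p + h *\<^sub>R a) + F p = \<Delta> h" for h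
    unfolding \<Delta>_def by (simp add: add_ac)
  have "norm (dd a (dd b F) p - dd b (dd a F) p) \<le> 0 + e" if e: "e > 0" for e
  proof -
    have "e / 2 > 0"
      using e by simp
    then have "\<forall>\<^sub>F h in at_right 0. norm (\<Delta> h - h\<^sup>2 *\<^sub>R dd a (dd b F) p) \<le> e / 2 * h\<^sup>2"
      unfolding \<Delta>_def by (intro second_difference_estimate) (use assms in simp_all)
    moreover from \<open>e / 2 > 0\<close>
    have "\<forall>\<^sub>F h in at_right 0. norm (\<Delta> h - h\<^sup>2 *\<^sub>R dd b (dd a F) p) \<le> e / 2 * h\<^sup>2"
      unfolding \<Delta>_swap[symmetric] by (intro second_difference_estimate) (use assms in simp_all)
    ultimately have "\<forall>\<^sub>F h in at_right 0. 0 < h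
        \<and> norm (\<Delta> h - h\<^sup>2 *\<^sub>R dd a (dd b F) p) \<le> e / 2 * h\<^sup>2
        \<and> norm (\<Delta> h - h\<^sup>2 *\<^sub>R dd b (dd a F) p) \<le> e / 2 * h\<^sup>2"
      by (intro eventually_conj eventually_at_right_less)
    then obtain h where h: "0 < h"
      and c1: "norm (\<Delta> h - h\<^sup>2 *\<^sub>R dd a (dd b F) p) \<le> e / 2 * h\<^sup>2"
      and c2: "norm (\<Delta> h - h\<^sup>2 *\<^sub>R dd b (dd a F) p) \<le> e / 2 * h\<^sup>2"
      using eventually_happens'[OF trivial_limit_at_right_real] by blast
    have "h\<^sup>2 *\<^sub>R (dd a (dd b F) p - dd b (dd a F) p)
        = (\<Delta> h - h\<^sup>2 *\<^sub>R dd b (dd a F) p) - (\<Delta> h - h\<^sup>2 *\<^sub>R dd a (dd b F) p)"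
      by (simp add: algebra_simps)
    then have "norm (h\<^sup>2 *\<^sub>R (dd a (dd b F) p - dd b (dd a F) p))
        \<le> norm (\<Delta> h - h\<^sup>2 *\<^sub>R dd b (dd a F) p) + norm (\<Delta> h - h\<^sup>2 *\<^sub>R dd a (dd b F) p)"
      by (metis norm_triangle_ineq4)
    also have "\<dots> \<le> e * h\<^sup>2"
      using c1 c2 by linarith
    finally have "norm (h\<^sup>2 *\<^sub>R (dd a (dd b F) p - dd b (dd a F) p)) \<le> e * h\<^sup>2" .
    then show ?thesis
      using h by (simp add: mult.commute)
  qed
  then show ?thesis
    using field_le_epsilon[of "norm (dd a (dd b F) p - dd b (dd a F) p)" 0] by simp
qed

lemma dd_add:
  assumes "F differentiable (at p)" "G differentiable (at p)"
  shows "dd w (\<lambda>q. F q + G q) p = dd w F p + dd w G p"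
proof -
  obtain F' G' where F': "(F has_derivative F') (at p)" and G': "(G has_derivative G') (at p)"
    using assms unfolding differentiable_def by blast
  show ?thesis
    using dd_eq_derivative[OF has_derivative_add[OF F' G']]
    unfolding dd_eq_derivative[OF F'] dd_eq_derivative[OF G'] .
qed

lemma dd_minus:
  assumes "F differentiable (at p)"
  shows "dd w (\<lambda>q. - F q) p = - dd w F p"
proof -
  obtain F' where F': "(F has_derivative F') (at p)"
    using assms unfolding differentiable_def by blast
  show ?thesis
    using dd_eq_derivative[OF has_derivative_minus[OF F']] unfolding dd_eq_derivative[OF F'] .
qed

lemma dd_mult:
  assumes "F differentiable (at p)" "G differentiable (at p)"
  shows "dd w (\<lambda>q. F q * G q) p = dd w F p * G p + F p * dd w G p"
proof -
  obtain F' G' where F': "(F has_derivative F') (at p)" and G': "(G has_derivative G') (at p)"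
    using assms unfolding differentiable_def by blast
  show ?thesis
    using dd_eq_derivative[OF has_derivative_mult[OF F' G']]
    unfolding dd_eq_derivative[OF F'] dd_eq_derivative[OF G'] by simp
qed

lemma dd_const: "dd w (\<lambda>q. c) p = 0"
  using dd_eq_derivative[OF has_derivative_const] .

lemma dd_cnj:
  assumes "F differentiable (at p)"
  shows "dd w (\<lambda>q. cnj (F q)) p = cnj (dd w F p)"
proof -
  obtain F' where F': "(F has_derivative F') (at p)"
    using assms unfolding differentiable_def by blast
  show ?thesis
    using dd_eq_derivative[OF has_derivative_cnj[OF F']] unfolding dd_eq_derivative[OF F'] .
qed

lemma dd_inverse:
  assumes "F differentiable (at p)" "F p \<noteq> 0"
  shows "dd w (\<lambda>q. inverse (F q)) p = - (inverse (F p) * dd w F p * inverse (F p))"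
proof -
  obtain F' where F': "(F has_derivative F') (at p)"
    using assms unfolding differentiable_def by blast
  show ?thesis
    using dd_eq_derivative[OF Deriv.has_derivative_inverse[OF assms(2) F']]
    unfolding dd_eq_derivative[OF F'] .
qed

lemma dd_of_real_ln:
  fixes L :: "'n::finite pt \<Rightarrow> real"
  assumes "(\<lambda>q. complex_of_real (L q)) differentiable (at p)" "L p > 0"
  shows "(\<lambda>q. complex_of_real (ln (L q))) differentiable (at p)"
    and "dd w (\<lambda>q. complex_of_real (ln (L q))) p = dd w (\<lambda>q. complex_of_real (L q)) p / L p"
proof -
  obtain L' where L': "((\<lambda>q. complex_of_real (L q)) has_derivative L') (at p)"
    using assms unfolding differentiable_def by blast
  have "(L has_derivative (\<lambda>h. Re (L' h))) (at p)"
    using has_derivative_Re[OF L'] by simp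
  from has_derivative_of_real[OF has_derivative_ln[OF assms(2) this]]
  have log: "((\<lambda>q. complex_of_real (ln (L q))) has_derivative
      (\<lambda>h. of_real (Re (L' h) * inverse (L p)))) (at p)" .
  then show "(\<lambda>q. complex_of_real (ln (L q))) differentiable (at p)"
    unfolding differentiable_def by blast
  have "((\<lambda>q. Im (complex_of_real (L q))) has_derivative (\<lambda>h. 0)) (at p)"
    by simp
  then have "(\<lambda>h. Im (L' h)) = (\<lambda>h. 0)"
    by (rule has_derivative_unique[OF has_derivative_Im[OF L']])
  from fun_cong[OF this, of w] have "Im (L' w) = 0"
    by simp
  then show "dd w (\<lambda>q. complex_of_real (ln (L q))) p = dd w (\<lambda>q. complex_of_real (L q)) p / L p"
    unfolding dd_eq_derivative[OF log] dd_eq_derivative[OF L']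
    by (simp add: complex_eq_iff divide_inverse)
qed

section \<open>Smooth functions on an open set\<close>

text \<open>The index counts the derivatives taken before the last differentiability requirement, so
  differentiable_upto U n F says that F is n + 1 times differentiable on U.\<close>

definition differentiable_upto :: "'n::finite pt set \<Rightarrow> nat \<Rightarrow> ('n pt \<Rightarrow> complex) \<Rightarrow> bool" where
  "differentiable_upto U n F \<longleftrightarrow> (\<forall>ws. length ws \<le> n \<longrightarrow> (\<forall>p\<in>U. ddl ws F differentiable (at p)))"

lemma ddl_snoc: "ddl (ws @ [w]) F = ddl ws (dd w F)"
  by (induction ws) auto

lemma ddl_transform_within_open:
  assumes "open U" "\<forall>q\<in>U. F q = G q" "p \<in> U"
  shows "ddl ws F p = ddl ws G p"
  using assms(3)
proof (induction ws arbitrary: p)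
  case (Cons w ws)
  then show ?case
    using dd_transform_within_open[OF assms(1), of "ddl ws F" "ddl ws G" p w] by simp
qed (use assms in simp)

lemma differentiable_transform_within_open:
  assumes "open U" "\<forall>q\<in>U. F q = G q" "p \<in> U" "F differentiable (at p)"
  shows "G differentiable (at p)"
proof -
  obtain F' where "(F has_derivative F') (at p)"
    using assms(4) unfolding differentiable_def by blast
  then have "(G has_derivative F') (at p)"
    using has_derivative_transform_within_open assms(1-3) by blast
  then show ?thesis
    unfolding differentiable_def by blast
qed

lemma differentiable_upto_transform_within_open:
  assumes "open U" "\<forall>q\<in>U. F q = G q" "differentiable_upto U n F"
  shows "differentiable_upto U n G"
  using assms ddl_transform_within_open[OF assms(1,2)]
    differentiable_transform_within_open[OF assms(1), of "ddl _ F" "ddl _ G"]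
  unfolding differentiable_upto_def by blast

lemma differentiable_upto_0: "differentiable_upto U 0 F \<longleftrightarrow> (\<forall>p\<in>U. F differentiable (at p))"
  unfolding differentiable_upto_def by auto

lemma differentiable_upto_Suc:
  fixes F :: "'n::finite pt \<Rightarrow> complex"
  shows "differentiable_upto U (Suc n) F \<longleftrightarrow>
     (\<forall>p\<in>U. F differentiable (at p)) \<and> (\<forall>w. differentiable_upto U n (dd w F))"
proof -
  have "(\<forall>ws. length ws \<le> Suc n \<longrightarrow> P ws) \<longleftrightarrow>
      P [] \<and> (\<forall>w ws. length ws \<le> n \<longrightarrow> P (ws @ [w]))" for P :: "'n pt list \<Rightarrow> bool"
  proof (intro iffI allI impI)
    fix ws :: "'n pt list"
    assume "P [] \<and> (\<forall>w ws. length ws \<le> n \<longrightarrow> P (ws @ [w]))" "length ws \<le> Suc n"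
    then show "P ws"
      by (cases ws rule: rev_cases) auto
  qed simp_all
  from this[of "\<lambda>ws. \<forall>p\<in>U. ddl ws F differentiable (at p)"] show ?thesis
    unfolding differentiable_upto_def ddl_snoc by auto
qed

lemma smooth_on_iff_differentiable_upto: "smooth_on U F \<longleftrightarrow> (\<forall>n. differentiable_upto U n F)"
  unfolding smooth_on_def differentiable_upto_def by blast

lemma smooth_on_differentiable: "smooth_on U F \<Longrightarrow> p \<in> U \<Longrightarrow> F differentiable (at p)"
  unfolding smooth_on_def by (drule spec[of _ "[]"]) simp

lemma smooth_on_dd: "smooth_on U F \<Longrightarrow> smooth_on U (dd w F)"
  unfolding smooth_on_def ddl_snoc[symmetric] by blast

lemma differentiable_upto_SucI:
  assumes "open U" "\<And>p. p \<in> U \<Longrightarrow> F differentiable (at p)"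
    and "\<And>w. differentiable_upto U n (G w)" "\<And>w q. q \<in> U \<Longrightarrow> G w q = dd w F q"
  shows "differentiable_upto U (Suc n) F"
  unfolding differentiable_upto_Suc
  using assms differentiable_upto_transform_within_open[OF assms(1)] by blast

lemma differentiable_upto_SucD: "differentiable_upto U (Suc n) F \<Longrightarrow> differentiable_upto U n F"
  unfolding differentiable_upto_def by auto

lemma differentiable_upto_const: "differentiable_upto U n (\<lambda>q. c)"
  unfolding differentiable_upto_def
proof (intro allI impI ballI)
  fix ws :: "'n::finite pt list" and p
  have "ddl ws (\<lambda>q. c) = (\<lambda>q. if ws = [] then c else 0)"
    by (induction ws) (auto simp: dd_const)
  then show "ddl ws (\<lambda>q. c) differentiable (at p)"
    by simp
qed

lemma differentiable_upto_add:
  assumes "open U"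
  shows "differentiable_upto U n F \<Longrightarrow> differentiable_upto U n G
    \<Longrightarrow> differentiable_upto U n (\<lambda>q. F q + G q)"
proof (induction n arbitrary: F G)
  case 0
  then show ?case
    unfolding differentiable_upto_0 by auto
next
  case (Suc n)
  then show ?case
    unfolding differentiable_upto_Suc[of U n F] differentiable_upto_Suc[of U n G]
    by (intro differentiable_upto_SucI[OF assms, where G = "\<lambda>w q. dd w F q + dd w G q"])
      (auto intro: Suc.IH simp: dd_add)
qed

lemma differentiable_upto_mult:
  assumes "open U"
  shows "differentiable_upto U n F \<Longrightarrow> differentiable_upto U n G
    \<Longrightarrow> differentiable_upto U n (\<lambda>q. F q * G q)"
proof (induction n arbitrary: F G)
  case 0
  then show ?case
    unfolding differentiable_upto_0 by auto
next
  case (Suc n)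
  then have F: "\<And>p. p \<in> U \<Longrightarrow> F differentiable (at p)" "differentiable_upto U n F"
      "\<And>w. differentiable_upto U n (dd w F)"
    and G: "\<And>p. p \<in> U \<Longrightarrow> G differentiable (at p)" "differentiable_upto U n G"
      "\<And>w. differentiable_upto U n (dd w G)"
    using differentiable_upto_SucD[OF Suc.prems(1)] differentiable_upto_SucD[OF Suc.prems(2)]
      Suc.prems unfolding differentiable_upto_Suc[of U n] by auto
  show ?case
  proof (rule differentiable_upto_SucI[OF assms, where G = "\<lambda>w q. dd w F q * G q + F q * dd w G q"])
    show "(\<lambda>q. F q * G q) differentiable (at p)" if "p \<in> U" for p
      using F(1) G(1) that by (simp add: differentiable_mult)
    show "differentiable_upto U n (\<lambda>q. dd w F q * G q + F q * dd w G q)" for w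
      using F G by (intro differentiable_upto_add[OF assms] Suc.IH)
    show "dd w F q * G q + F q * dd w G q = dd w (\<lambda>q. F q * G q) q" if "q \<in> U" for w q
      using F(1) G(1) that by (simp add: dd_mult)
  qed
qed

lemma differentiable_upto_minus:
  "open U \<Longrightarrow> differentiable_upto U n F \<Longrightarrow> differentiable_upto U n (\<lambda>q. - F q)"
  using differentiable_upto_mult[OF _ differentiable_upto_const[of U n "-1"], of F] by simp

lemma differentiable_upto_cnj:
  assumes "open U"
  shows "differentiable_upto U n F \<Longrightarrow> differentiable_upto U n (\<lambda>q. cnj (F q))"
proof (induction n arbitrary: F)
  case 0
  then show ?case
    unfolding differentiable_upto_0 by (simp add: differentiable_cnj_iff)
next
  case (Suc n)
  then have F: "\<And>p. p \<in> U \<Longrightarrow> F differentiable (at p)" "\<And>w. differentiable_upto U n (dd w F)"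
    by (auto simp: differentiable_upto_Suc)
  show ?case
  proof (rule differentiable_upto_SucI[OF assms, where G = "\<lambda>w q. cnj (dd w F q)"])
    show "(\<lambda>q. cnj (F q)) differentiable (at p)" if "p \<in> U" for p
      using F(1)[OF that] by (simp add: differentiable_cnj_iff)
    show "differentiable_upto U n (\<lambda>q. cnj (dd w F q))" for w
      using F(2) by (rule Suc.IH)
    show "cnj (dd w F q) = dd w (\<lambda>q. cnj (F q)) q" if "q \<in> U" for w q
      using dd_cnj[OF F(1)[OF that]] by simp
  qed
qed

lemma differentiable_upto_inverse:
  assumes "open U" "smooth_on U H" "\<And>p. p \<in> U \<Longrightarrow> H p \<noteq> 0"
  shows "differentiable_upto U n (\<lambda>q. inverse (H q))"
proof (induction n)
  case 0
  then show ?case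
    unfolding differentiable_upto_0
    using assms(3) smooth_on_differentiable[OF assms(2)] by (auto intro!: differentiable_inverse)
next
  case (Suc n)
  have H: "\<And>p. p \<in> U \<Longrightarrow> H differentiable (at p)" "\<And>w. differentiable_upto U n (dd w H)"
    using smooth_on_differentiable[OF assms(2)] smooth_on_dd[OF assms(2)]
    by (auto simp: smooth_on_iff_differentiable_upto)
  show ?case
  proof (rule differentiable_upto_SucI[OF assms(1),
        where G = "\<lambda>w q. - (inverse (H q) * dd w H q * inverse (H q))"])
    show "(\<lambda>q. inverse (H q)) differentiable (at p)" if "p \<in> U" for p
      using H(1)[OF that] assms(3)[OF that] by (rule differentiable_inverse)
    show "differentiable_upto U n (\<lambda>q. - (inverse (H q) * dd w H q * inverse (H q)))" for w
      using differentiable_upto_minus[OF assms(1)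
          differentiable_upto_mult[OF assms(1) differentiable_upto_mult[OF assms(1) Suc.IH H(2)] Suc.IH]] .
    show "- (inverse (H q) * dd w H q * inverse (H q)) = dd w (\<lambda>q. inverse (H q)) q"
      if "q \<in> U" for w q
      using dd_inverse[OF H(1)[OF that] assms(3)[OF that]] by simp
  qed
qed

lemma smooth_on_const: "smooth_on U (\<lambda>q. c)"
  by (simp add: smooth_on_iff_differentiable_upto differentiable_upto_const)

lemma smooth_on_add: "open U \<Longrightarrow> smooth_on U F \<Longrightarrow> smooth_on U G \<Longrightarrow> smooth_on U (\<lambda>q. F q + G q)"
  by (simp add: smooth_on_iff_differentiable_upto differentiable_upto_add)

lemma smooth_on_mult: "open U \<Longrightarrow> smooth_on U F \<Longrightarrow> smooth_on U G \<Longrightarrow> smooth_on U (\<lambda>q. F q * G q)"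
  by (simp add: smooth_on_iff_differentiable_upto differentiable_upto_mult)

lemma smooth_on_cnj: "open U \<Longrightarrow> smooth_on U F \<Longrightarrow> smooth_on U (\<lambda>q. cnj (F q))"
  by (simp add: smooth_on_iff_differentiable_upto differentiable_upto_cnj)

lemma smooth_on_inverse:
  "open U \<Longrightarrow> smooth_on U H \<Longrightarrow> (\<And>p. p \<in> U \<Longrightarrow> H p \<noteq> 0) \<Longrightarrow> smooth_on U (\<lambda>q. inverse (H q))"
  by (simp add: smooth_on_iff_differentiable_upto differentiable_upto_inverse)

lemma smooth_on_minus: "open U \<Longrightarrow> smooth_on U F \<Longrightarrow> smooth_on U (\<lambda>q. - F q)"
  by (simp add: smooth_on_iff_differentiable_upto differentiable_upto_minus)

lemma smooth_on_diff:
  assumes "open U" "smooth_on U F" "smooth_on U G"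
  shows "smooth_on U (\<lambda>q. F q - G q)"
  using smooth_on_add[OF assms(1,2) smooth_on_minus[OF assms(1,3)]] by simp

lemma smooth_on_transform_within_open:
  assumes "open U" "\<forall>q\<in>U. F q = G q" "smooth_on U F"
  shows "smooth_on U G"
  using differentiable_upto_transform_within_open[OF assms(1,2)] assms(3)
  unfolding smooth_on_iff_differentiable_upto by blast

lemma smooth_on_of_real_ln:
  fixes L :: "'n::finite pt \<Rightarrow> real"
  assumes U: "open U" and L: "smooth_on U (\<lambda>q. complex_of_real (L q))" "\<And>p. p \<in> U \<Longrightarrow> L p > 0"
  shows "smooth_on U (\<lambda>q. complex_of_real (ln (L q)))"
proof -
  have "differentiable_upto U (Suc n) (\<lambda>q. complex_of_real (ln (L q)))" for n
  proof (rule differentiable_upto_SucI[OF U])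
    show "(\<lambda>q. complex_of_real (ln (L q))) differentiable (at p)" if "p \<in> U" for p
      using dd_of_real_ln(1) smooth_on_differentiable[OF L(1)] L(2) that by blast
    fix w
    have "complex_of_real (L p) \<noteq> 0" if "p \<in> U" for p
      using L(2)[OF that] by simp
    then have "smooth_on U (\<lambda>q. dd w (\<lambda>q. complex_of_real (L q)) q * inverse (complex_of_real (L q)))"
      using L(1) by (intro smooth_on_mult smooth_on_inverse smooth_on_dd U)
    then show "differentiable_upto U n
        (\<lambda>q. dd w (\<lambda>q. complex_of_real (L q)) q * inverse (complex_of_real (L q)))"
      using smooth_on_iff_differentiable_upto by blast
    show "dd w (\<lambda>q. complex_of_real (L q)) q * inverse (complex_of_real (L q))
        = dd w (\<lambda>q. complex_of_real (ln (L q))) q" if "q \<in> U" for q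
      using dd_of_real_ln(2)[OF smooth_on_differentiable[OF L(1) that] L(2)[OF that]]
      by (simp add: divide_inverse)
  qed
  then show ?thesis
    using smooth_on_iff_differentiable_upto differentiable_upto_SucD by blast
qed

section \<open>The operators on a chart with a fibrewise hyperbolic metric\<close>

lemma dd_linear_combination:
  assumes "F differentiable (at p)" "G differentiable (at p)"
  shows "dd w (\<lambda>q. (F q + c * G q) / 2) p = (dd w F p + c * dd w G p) / 2"
proof -
  obtain F' G' where F': "(F has_derivative F') (at p)" and G': "(G has_derivative G') (at p)"
    using assms unfolding differentiable_def by blast
  have "((\<lambda>q. (F q + c * G q) / 2) has_derivative (\<lambda>h. (F' h + c * G' h) / 2)) (at p)"
    using F' G' by (auto intro!: derivative_eq_intros)
  then show ?thesis
    unfolding dd_eq_derivative[OF F'] dd_eq_derivative[OF G'] by (rule dd_eq_derivative)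
qed

locale hyperbolic_chart =
  fixes U :: "'n::finite pt set" and lam :: "'n pt \<Rightarrow> real"
  assumes open_U: "open U" and smooth_lam: "smooth_on U (lamc lam)"
    and lam_pos: "\<forall>p\<in>U. lam p > 0"
    and curvature: "\<forall>p\<in>U. dz (dzb (loglam lam)) p = lamc lam p"
begin

text \<open>Extending by zero outside U turns the pointwise identities on U into equations
  between functions, which the simplifier can use as rewrite rules.\<close>

definition zero_ext :: "('n pt \<Rightarrow> complex) \<Rightarrow> 'n pt \<Rightarrow> complex" where
  "zero_ext F = (\<lambda>p. if p \<in> U then F p else 0)"

definition wirtinger ::
    "'n pt \<Rightarrow> 'n pt \<Rightarrow> complex \<Rightarrow> ('n pt \<Rightarrow> complex) \<Rightarrow> 'n pt \<Rightarrow> complex" where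
  "wirtinger a b c F = zero_ext (\<lambda>p. (dd a F p + c * dd b F p) / 2)"

definition "Dz = wirtinger (0, 1) (0, \<i>) (- \<i>)"
definition "Dzb = wirtinger (0, 1) (0, \<i>) \<i>"
definition "Ds k = wirtinger (axis k 1, 0) (axis k \<i>, 0) (- \<i>)"
definition "Dsb k = wirtinger (axis k 1, 0) (axis k \<i>, 0) \<i>"
definition "Lam = zero_ext (lamc lam)"
definition "Lam_inv = zero_ext (\<lambda>p. inverse (lamc lam p))"
definition "LogLam = zero_ext (loglam lam)"

abbreviation smooth :: "('n pt \<Rightarrow> complex) \<Rightarrow> bool" where
  "smooth F \<equiv> smooth_on U F"

lemma zero_ext_in: "p \<in> U \<Longrightarrow> zero_ext F p = F p"
  and zero_ext_out: "p \<notin> U \<Longrightarrow> zero_ext F p = 0"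
  unfolding zero_ext_def by auto

lemma wirtinger_in: "p \<in> U \<Longrightarrow> wirtinger a b c F p = (dd a F p + c * dd b F p) / 2"
  and wirtinger_out: "p \<notin> U \<Longrightarrow> wirtinger a b c F p = 0"
  unfolding wirtinger_def zero_ext_def by auto

lemma smooth_zero_ext: "smooth F \<Longrightarrow> smooth (zero_ext F)"
  using smooth_on_transform_within_open[OF open_U] zero_ext_in by metis

lemma smooth_wirtinger: "smooth F \<Longrightarrow> smooth (wirtinger a b c F)"
  unfolding wirtinger_def divide_inverse
  by (intro smooth_zero_ext smooth_on_mult smooth_on_add smooth_on_dd smooth_on_const open_U)

lemma wirtinger_zero_ext: "wirtinger a b c (zero_ext F) = wirtinger a b c F"
proof
  fix p
  show "wirtinger a b c (zero_ext F) p = wirtinger a b c F p"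
    using dd_transform_within_open[OF open_U, of "zero_ext F" F p] zero_ext_in
    by (cases "p \<in> U") (simp_all add: wirtinger_in wirtinger_out)
qed

lemma wirtinger_add:
  assumes "smooth F" "smooth G"
  shows "wirtinger a b c (\<lambda>q. F q + G q) = (\<lambda>q. wirtinger a b c F q + wirtinger a b c G q)"
proof
  fix p
  show "wirtinger a b c (\<lambda>q. F q + G q) p = wirtinger a b c F p + wirtinger a b c G p"
    using assms
    by (cases "p \<in> U") (simp_all add: wirtinger_in wirtinger_out dd_add smooth_on_differentiable add_divide_distrib algebra_simps)
qed

lemma wirtinger_mult:
  assumes "smooth F" "smooth G"
  shows "wirtinger a b c (\<lambda>q. F q * G q) = (\<lambda>q. wirtinger a b c F q * G q + F q * wirtinger a b c G q)"
proof
  fix p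
  show "wirtinger a b c (\<lambda>q. F q * G q) p = wirtinger a b c F p * G p + F p * wirtinger a b c G p"
    using assms
    by (cases "p \<in> U") (simp_all add: wirtinger_in wirtinger_out dd_mult smooth_on_differentiable field_simps)
qed

lemma wirtinger_minus:
  assumes "smooth F"
  shows "wirtinger a b c (\<lambda>q. - F q) = (\<lambda>q. - wirtinger a b c F q)"
proof
  fix p
  show "wirtinger a b c (\<lambda>q. - F q) p = - wirtinger a b c F p"
    using assms
    by (cases "p \<in> U") (simp_all add: wirtinger_in wirtinger_out dd_minus smooth_on_differentiable field_simps)
qed

lemma wirtinger_diff:
  "smooth F \<Longrightarrow> smooth G \<Longrightarrow> wirtinger a b c (\<lambda>q. F q - G q) = (\<lambda>q. wirtinger a b c F q - wirtinger a b c G q)"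
  using wirtinger_add[OF _ smooth_on_minus[OF open_U], of F G] wirtinger_minus[of G] by simp

lemma wirtinger_const: "wirtinger a b c (\<lambda>q. e) = (\<lambda>q. 0)"
  by (simp add: wirtinger_def zero_ext_def dd_const)

lemma dd_wirtinger:
  assumes "smooth F" "p \<in> U"
  shows "dd x (wirtinger a b c F) p = (dd x (dd a F) p + c * dd x (dd b F) p) / 2"
proof -
  have "dd x (wirtinger a b c F) p = dd x (\<lambda>q. (dd a F q + c * dd b F q) / 2) p"
    unfolding wirtinger_def using dd_transform_within_open[OF open_U _ assms(2)] zero_ext_in by blast
  also have "\<dots> = (dd x (dd a F) p + c * dd x (dd b F) p) / 2"
    using assms by (intro dd_linear_combination smooth_on_differentiable smooth_on_dd)
  finally show ?thesis .
qed

lemma wirtinger_commute: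
  assumes F: "smooth F"
  shows "wirtinger a b c (wirtinger a' b' c' F) = wirtinger a' b' c' (wirtinger a b c F)"
proof
  fix p
  show "wirtinger a b c (wirtinger a' b' c' F) p = wirtinger a' b' c' (wirtinger a b c F) p"
  proof (cases "p \<in> U")
    case True
    have "dd x (dd y F) p = dd y (dd x F) p" for x y
      using F True
      by (intro dd_commute[OF open_U]) (auto intro: smooth_on_differentiable smooth_on_dd)
    then show ?thesis
      using F True by (simp add: wirtinger_in dd_wirtinger field_simps)
  qed (simp add: wirtinger_out)
qed

lemma cnj_wirtinger: "smooth F \<Longrightarrow> cnj (wirtinger a b c F q) = wirtinger a b (cnj c) (\<lambda>q. cnj (F q)) q"
  by (cases "q \<in> U") (simp_all add: wirtinger_in wirtinger_out dd_cnj smooth_on_differentiable)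

lemma lamc_nonzero: "p \<in> U \<Longrightarrow> lamc lam p \<noteq> 0"
  using lam_pos by (auto simp: lamc_def)

lemma smooth_Lam: "smooth Lam"
  unfolding Lam_def by (rule smooth_zero_ext[OF smooth_lam])

lemma smooth_Lam_inv: "smooth Lam_inv"
  unfolding Lam_inv_def
  using smooth_on_inverse[OF open_U smooth_lam lamc_nonzero] by (rule smooth_zero_ext)

lemma smooth_LogLam: "smooth LogLam"
  unfolding LogLam_def loglam_def
  using smooth_lam lam_pos unfolding lamc_def
  by (intro smooth_zero_ext smooth_on_of_real_ln open_U) auto

lemma dd_loglam: "p \<in> U \<Longrightarrow> dd w (loglam lam) p = dd w (lamc lam) p * inverse (lamc lam p)"
  using dd_of_real_ln(2)[of lam] smooth_on_differentiable[OF smooth_lam] lam_pos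
  unfolding lamc_def loglam_def by (simp add: divide_inverse)

lemma wirtinger_Lam: "wirtinger a b c Lam = (\<lambda>q. Lam q * wirtinger a b c LogLam q)"
proof
  fix p
  show "wirtinger a b c Lam p = Lam p * wirtinger a b c LogLam p"
    using lamc_nonzero[of p]
    by (cases "p \<in> U")
      (simp_all add: Lam_def LogLam_def wirtinger_zero_ext wirtinger_in wirtinger_out zero_ext_in dd_loglam field_simps)
qed

lemma wirtinger_Lam_inv: "wirtinger a b c Lam_inv = (\<lambda>q. - (Lam_inv q * wirtinger a b c LogLam q))"
proof
  fix p
  show "wirtinger a b c Lam_inv p = - (Lam_inv p * wirtinger a b c LogLam p)"
  proof (cases "p \<in> U")
    case True
    then show ?thesis
      using lamc_nonzero[OF True] smooth_on_differentiable[OF smooth_lam True]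
      by (simp add: Lam_inv_def LogLam_def wirtinger_zero_ext wirtinger_in zero_ext_in dd_loglam dd_inverse)
        (simp add: field_simps)
  qed (simp add: wirtinger_out)
qed

lemmas wirtinger_rules = wirtinger_add wirtinger_mult wirtinger_minus wirtinger_diff wirtinger_const wirtinger_zero_ext smooth_wirtinger
  wirtinger_Lam wirtinger_Lam_inv

lemmas Dz_rules = wirtinger_rules[where a = "(0, 1)" and b = "(0, \<i>)" and c = "- \<i>", folded Dz_def]
lemmas Dzb_rules = wirtinger_rules[where a = "(0, 1)" and b = "(0, \<i>)" and c = "\<i>", folded Dzb_def]
lemmas Ds_rules =
  wirtinger_rules[where a = "(axis k 1, 0)" and b = "(axis k \<i>, 0)" and c = "- \<i>" for k, folded Ds_def]
lemmas Dsb_rules =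
  wirtinger_rules[where a = "(axis k 1, 0)" and b = "(axis k \<i>, 0)" and c = "\<i>" for k, folded Dsb_def]

lemma Dz_Ds_commute: "smooth F \<Longrightarrow> Dz (Ds k F) = Ds k (Dz F)"
  and Dz_Dsb_commute: "smooth F \<Longrightarrow> Dz (Dsb k F) = Dsb k (Dz F)"
  and Dzb_Ds_commute: "smooth F \<Longrightarrow> Dzb (Ds k F) = Ds k (Dzb F)"
  and Dzb_Dsb_commute: "smooth F \<Longrightarrow> Dzb (Dsb k F) = Dsb k (Dzb F)"
  and Dz_Dzb_commute: "smooth F \<Longrightarrow> Dz (Dzb F) = Dzb (Dz F)"
  and Dsb_Ds_commute: "smooth F \<Longrightarrow> Dsb l (Ds k F) = Ds k (Dsb l F)"
  and Ds_Ds_commute: "smooth F \<Longrightarrow> Ds l (Ds k F) = Ds k (Ds l F)"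
  and Dsb_Dsb_commute: "smooth F \<Longrightarrow> Dsb l (Dsb k F) = Dsb k (Dsb l F)"
  unfolding Dz_def Dzb_def Ds_def Dsb_def by (rule wirtinger_commute; assumption)+

lemma Dzb_Dz_LogLam: "Dzb (Dz LogLam) = Lam"
proof
  fix p
  show "Dzb (Dz LogLam) p = Lam p"
  proof (cases "p \<in> U")
    case True
    have Dzb_eq: "\<forall>q\<in>U. Dzb LogLam q = dzb (loglam lam) q"
      by (simp add: Dzb_def LogLam_def wirtinger_zero_ext wirtinger_in dzb_def)
    have "Dz (Dzb LogLam) p = dz (dzb (loglam lam)) p"
      using dd_transform_within_open[OF open_U Dzb_eq True]
      by (simp add: Dz_def wirtinger_in[OF True] dz_def)
    then show ?thesis
      using curvature True Dz_Dzb_commute[OF smooth_LogLam] by (simp add: Lam_def zero_ext_in)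
  qed (simp add: Dz_def Dzb_def Lam_def wirtinger_out zero_ext_out)
qed

lemma Dzb_Dz_funpow_LogLam: "Dzb ((Dz ^^ Suc k) LogLam) = (Dz ^^ k) Lam"
proof (induction k)
  case (Suc k)
  have "smooth ((Dz ^^ Suc k) LogLam)"
    by (induction k) (simp_all add: smooth_LogLam Dz_rules)
  from Dz_Dzb_commute[OF this, symmetric] show ?case
    using Suc.IH by simp
qed (simp add: Dzb_Dz_LogLam)

text \<open>The commutation rules move Dz innermost, so the curvature equation is used in the form
  Dzb (Dz^(k+1) LogLam) = Dz^k Lam; the identities involve at most four z-derivatives.\<close>

lemmas Dzb_Dz_LogLam_iterates =
  Dzb_Dz_funpow_LogLam[of 0, unfolded funpow.simps comp_apply id_apply]
  Dzb_Dz_funpow_LogLam[of "Suc 0", unfolded funpow.simps comp_apply id_apply]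
  Dzb_Dz_funpow_LogLam[of "Suc (Suc 0)", unfolded funpow.simps comp_apply id_apply]
  Dzb_Dz_funpow_LogLam[of "Suc (Suc (Suc 0))", unfolded funpow.simps comp_apply id_apply]

lemma zero_ext_add: "zero_ext (\<lambda>q. F q + G q) = (\<lambda>q. zero_ext F q + zero_ext G q)"
  and zero_ext_diff: "zero_ext (\<lambda>q. F q - G q) = (\<lambda>q. zero_ext F q - zero_ext G q)"
  and zero_ext_mult: "zero_ext (\<lambda>q. F q * G q) = (\<lambda>q. zero_ext F q * zero_ext G q)"
  and zero_ext_minus: "zero_ext (\<lambda>q. - F q) = (\<lambda>q. - zero_ext F q)"
  and zero_ext_cnj: "zero_ext (\<lambda>q. cnj (F q)) = (\<lambda>q. cnj (zero_ext F q))"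
  and zero_ext_divide_lamc: "zero_ext (\<lambda>q. F q / lamc lam q) = (\<lambda>q. zero_ext F q * Lam_inv q)"
  by (auto simp: zero_ext_def Lam_inv_def divide_inverse)

lemma zero_ext_dz: "zero_ext (dz F) = Dz (zero_ext F)"
  and zero_ext_dzb: "zero_ext (dzb F) = Dzb (zero_ext F)"
  and zero_ext_ds: "zero_ext (ds k F) = Ds k (zero_ext F)"
  and zero_ext_dsb: "zero_ext (dsb k F) = Dsb k (zero_ext F)"
  unfolding Dz_def Dzb_def Ds_def Dsb_def wirtinger_zero_ext
  by (auto simp: wirtinger_def zero_ext_def dz_def dzb_def ds_def dsb_def)

lemma dz_eq_Dz: "p \<in> U \<Longrightarrow> dz F p = Dz (zero_ext F) p"
  and dzb_eq_Dzb: "p \<in> U \<Longrightarrow> dzb F p = Dzb (zero_ext F) p"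
  and ds_eq_Ds: "p \<in> U \<Longrightarrow> ds k F p = Ds k (zero_ext F) p"
  and dsb_eq_Dsb: "p \<in> U \<Longrightarrow> dsb k F p = Dsb k (zero_ext F) p"
  and lamc_eq_Lam: "p \<in> U \<Longrightarrow> lamc lam p = Lam p"
  and divide_lamc_eq: "p \<in> U \<Longrightarrow> x / lamc lam p = x * Lam_inv p"
  by (simp_all flip: zero_ext_dz zero_ext_dzb zero_ext_ds zero_ext_dsb
      add: zero_ext_in Lam_def Lam_inv_def divide_inverse)

lemma cnj_Dz: "smooth F \<Longrightarrow> cnj (Dz F q) = Dzb (\<lambda>q. cnj (F q)) q"
  and cnj_Dzb: "smooth F \<Longrightarrow> cnj (Dzb F q) = Dz (\<lambda>q. cnj (F q)) q"
  and cnj_Ds: "smooth F \<Longrightarrow> cnj (Ds k F q) = Dsb k (\<lambda>q. cnj (F q)) q"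
  and cnj_Dsb: "smooth F \<Longrightarrow> cnj (Dsb k F q) = Ds k (\<lambda>q. cnj (F q)) q"
  by (simp_all add: Dz_def Dzb_def Ds_def Dsb_def cnj_wirtinger)

lemma cnj_Lam: "cnj (Lam q) = Lam q"
  and cnj_Lam_inv: "cnj (Lam_inv q) = Lam_inv q"
  and cnj_LogLam: "cnj (LogLam q) = LogLam q"
  and cnj_lamc: "cnj (lamc lam q) = lamc lam q"
  and cnj_loglam: "cnj (loglam lam q) = loglam lam q"
  by (simp_all add: Lam_def Lam_inv_def LogLam_def zero_ext_def lamc_def loglam_def)

lemma Lam_inv_eq: "p \<in> U \<Longrightarrow> Lam_inv p = inverse (Lam p)"
  and Lam_nonzero: "p \<in> U \<Longrightarrow> Lam p \<noteq> 0"
  by (simp_all add: Lam_inv_def Lam_def zero_ext_in lamc_nonzero)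

lemmas chart_simps =
  zero_ext_add zero_ext_diff zero_ext_mult zero_ext_minus zero_ext_cnj zero_ext_divide_lamc
  zero_ext_dz zero_ext_dzb zero_ext_ds zero_ext_dsb Lam_def[symmetric] LogLam_def[symmetric]
  dz_eq_Dz dzb_eq_Dzb ds_eq_Ds dsb_eq_Dsb lamc_eq_Lam divide_lamc_eq
  Dz_rules Dzb_rules Ds_rules Dsb_rules
  Dz_Ds_commute Dz_Dsb_commute Dzb_Ds_commute Dzb_Dsb_commute Dz_Dzb_commute
  Dsb_Ds_commute Ds_Ds_commute Dsb_Dsb_commute Dzb_Dz_LogLam_iterates
  cnj_Dz cnj_Dzb cnj_Ds cnj_Dsb cnj_Lam cnj_Lam_inv cnj_LogLam cnj_lamc cnj_loglam
  smooth_on_add[OF open_U] smooth_on_mult[OF open_U] smooth_on_minus[OF open_U]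
  smooth_on_diff[OF open_U] smooth_on_cnj[OF open_U] smooth_on_const smooth_zero_ext
  smooth_Lam smooth_Lam_inv smooth_LogLam Lam_inv_eq Lam_nonzero

lemma xi_eq:
  assumes "smooth f" "p \<in> U"
  shows "xi lam k f p = - Acoef lam k p * Pop lam f p"
  using assms unfolding xi_def Pop_def Acoef_def acoef_def
  by (simp add: chart_simps) (simp add: field_simps Lam_nonzero)

lemma box1_vk_commutator:
  assumes "smooth f" "p \<in> U"
  shows "box1 lam (vk lam k f) p - vk lam k (box1 lam f) p
    = box lam (vk lam k f) p - vk lam k (box lam f) p"
  using assms unfolding box1_def box_def vk_def acoef_def
  by (simp add: chart_simps) (simp add: field_simps Lam_nonzero)

lemma box_vk_commutator:
  assumes "smooth f" "p \<in> U"
  shows "box lam (vk lam k f) p - vk lam k (box lam f) p = xi lam k f p"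
  using assms unfolding xi_def box_def vk_def Acoef_def acoef_def
  by (simp add: chart_simps) (simp add: field_simps Lam_nonzero)

lemma box1_vbar_commutator:
  assumes "smooth f" "p \<in> U"
  shows "box1 lam (vbar lam l f) p - vbar lam l (box1 lam f) p
    = box lam (vbar lam l f) p - vbar lam l (box lam f) p"
  using assms unfolding box1_def box_def vbar_def acoef_def
  by (simp add: chart_simps) (simp add: field_simps Lam_nonzero)

lemma box_vbar_commutator:
  assumes "smooth f" "p \<in> U"
  shows "box lam (vbar lam l f) p - vbar lam l (box lam f) p = xib lam l f p"
  using assms unfolding xib_def box_def vbar_def Acoef_def acoef_def
  by (simp add: chart_simps) (simp add: field_simps Lam_nonzero)

lemma box1_vk_ecoef:
  assumes "p \<in> U"
  shows "box1 lam (vk lam k (ecoef lam i j)) p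
    = xi lam k (ecoef lam i j) p + xi lam i (ecoef lam k j) p + LvB lam k i p * cnj (Acoef lam j p)"
  using assms
  unfolding box1_def box_def vk_def xi_def ecoef_def LvB_def lie_beltrami_def Acoef_def acoef_def
  by (simp only: chart_simps complex_cnj_mult complex_cnj_minus complex_cnj_diff complex_cnj_add
      complex_cnj_divide, simp add: chart_simps, simp add: field_simps Lam_nonzero)

end

theorem lemma3p6:
  fixes g :: nat and U :: "((complex ^ 'n::finite) \<times> complex) set"
    and lam :: "(complex ^ 'n) \<times> complex \<Rightarrow> real" and k l i j :: 'n
  assumes "g \<ge> 2" and "CARD('n) = 3 * g - 3"
    and "open U"
    and "smooth_on U (lamc lam)"
    and "\<forall>p\<in>U. lam p > 0"
    and "\<forall>p\<in>U. dz (dzb (loglam lam)) p = lamc lam p"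
  shows "(\<forall>f. smooth_on U f \<longrightarrow> (\<forall>p\<in>U.
            box1 lam (vk lam k f) p - vk lam k (box1 lam f) p
              = box lam (vk lam k f) p - vk lam k (box lam f) p
          \<and> box lam (vk lam k f) p - vk lam k (box lam f) p = xi lam k f p
          \<and> box1 lam (vbar lam l f) p - vbar lam l (box1 lam f) p
              = box lam (vbar lam l f) p - vbar lam l (box lam f) p
          \<and> box lam (vbar lam l f) p - vbar lam l (box lam f) p = xib lam l f p
          \<and> xi lam k f p = - Acoef lam k p * Pop lam f p))
       \<and> (\<forall>p\<in>U. box1 lam (vk lam k (ecoef lam i j)) p
             = xi lam k (ecoef lam i j) p + xi lam i (ecoef lam k j) p
               + LvB lam k i p * cnj (Acoef lam j p))"
proof -
  \<comment> \<open>The genus only fixes the number of base coordinates; the identities hold for any number.\<close>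
  interpret hyperbolic_chart U lam
    using assms(3-6) by unfold_locales
  show ?thesis
    by (intro conjI allI impI ballI box1_vk_commutator box_vk_commutator box1_vbar_commutator
        box_vbar_commutator xi_eq box1_vk_ecoef)
qed

end
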